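(* Let $X$ be a second-countable Hausdorff topological space and $T:X\to X$ a continuous map. The following are equivalent: (i) $T$ is topologically quasi-rigid; (ii) for every $N\in\mathbb{N}$, the $N$-fold direct product $T_{(N)}:X^N\to X^N$ is topologically recurrent.
   Context: A dynamical system $(X,T)$ is a continuous self-map $T$ of a Hausdorff topological space $X$. For $N\in\mathbb{N}$, $T_{(N)}:X^N\to X^N$ is $T_{(N)}(x_1,\dots,x_N)=(Tx_1,\dots,Tx_N)$. A map $T$ is topologically recurrent if for every non-empty open $U\subset X$ there is $n\in\mathbb{N}$ with $T^n(U)\cap U\neq\varnothing$. $T$ is topologically quasi-rigid with respect to a strictly increasing sequence $(n_k)_{k\in\mathbb{N}}$ of positive integers if for every non-empty open $U\subset X$ there is $k_U$ with $T^{n_k}(U)\cap U\neq\varnothing$ for all $k\geq k_U$; $T$ is topologically quasi-rigid if it is so with respect to some such sequence. *)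

theory Defs
  imports "HOL-Analysis.Analysis"
begin

definition top_recurrent :: "'a topology \<Rightarrow> ('a \<Rightarrow> 'a) \<Rightarrow> bool" where
  "top_recurrent X T \<longleftrightarrow>
     (\<forall>U. openin X U \<and> U \<noteq> {} \<longrightarrow> (\<exists>n::nat. n \<ge> 1 \<and> (T ^^ n) ` U \<inter> U \<noteq> {}))"

definition top_quasi_rigid_wrt :: "'a topology \<Rightarrow> ('a \<Rightarrow> 'a) \<Rightarrow> (nat \<Rightarrow> nat) \<Rightarrow> bool" where
  "top_quasi_rigid_wrt X T nk \<longleftrightarrow>
     strict_mono nk \<and> (\<forall>k. nk k \<ge> 1) \<and>
     (\<forall>U. openin X U \<and> U \<noteq> {} \<longrightarrow>
        (\<exists>kU. \<forall>k\<ge>kU. (T ^^ nk k) ` U \<inter> U \<noteq> {}))"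

definition top_quasi_rigid :: "'a topology \<Rightarrow> ('a \<Rightarrow> 'a) \<Rightarrow> bool" where
  "top_quasi_rigid X T \<longleftrightarrow> (\<exists>nk. top_quasi_rigid_wrt X T nk)"

text \<open>The N-fold direct product X^N, modelled as extensional functions on
  {..<N} with the product topology, and the product map T_(N).\<close>
definition power_space :: "'a topology \<Rightarrow> nat \<Rightarrow> (nat \<Rightarrow> 'a) topology" where
  "power_space X N = product_topology (\<lambda>_. X) {..<N}"

definition prod_map :: "nat \<Rightarrow> ('a \<Rightarrow> 'a) \<Rightarrow> (nat \<Rightarrow> 'a) \<Rightarrow> (nat \<Rightarrow> 'a)" where
  "prod_map N T x = restrict (\<lambda>i. T (x i)) {..<N}"

end

theory Submission
  imports Defs
begin

text \<open>A box \<open>V\<^sub>0 \<times> \<dots> \<times> V\<^sub>N\<^sub>-\<^sub>1\<close> returns to itself under \<open>T\<^sub>(\<^sub>N\<^sub>)\<^sup>n\<close> exactly when every \<open>V\<^sub>i\<close> returns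
  under \<open>T\<^sup>n\<close>, and boxes form a base of \<open>X\<^sup>N\<close>. Hence quasi-rigidity along \<open>n\<^sub>k\<close> makes any
  finitely many open sets return simultaneously at a common time \<open>n\<^sub>k\<close>, which gives recurrence of
  every \<open>T\<^sub>(\<^sub>N\<^sub>)\<close>. Conversely, recurrence of a continuous map yields returns at arbitrarily
  large times; applied to \<open>T\<^sub>(\<^sub>N\<^sub>)\<close> and the box built from the first \<open>N\<close> members \<open>V\<^sub>0, V\<^sub>1, \<dots>\<close>
  of a countable base, it gives a time \<open>n\<^sub>k > n\<^sub>k\<^sub>-\<^sub>1\<close> at which \<open>V\<^sub>0, \<dots>, V\<^sub>k\<close> all return. Every
  non-empty open set contains some \<open>V\<^sub>m\<close> and so returns at all times \<open>n\<^sub>k\<close> with \<open>k \<ge> m\<close>.\<close>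

lemma continuous_map_funpow:
  "continuous_map X X f \<Longrightarrow> continuous_map X X (f ^^ n)"
  by (induction n) (auto intro: continuous_map_compose)

lemma top_recurrent_returns_after:
  assumes f: "continuous_map X X f" and rec: "top_recurrent X f"
    and U: "openin X U" "U \<noteq> {}"
  shows "\<exists>n>L. (f ^^ n) ` U \<inter> U \<noteq> {}"
  using U
proof (induction L arbitrary: U)
  case 0
  then show ?case
    using rec unfolding top_recurrent_def by (metis Suc_le_eq One_nat_def)
next
  case (Suc L)
  obtain n x where n: "n \<ge> 1" "x \<in> U" "(f ^^ n) x \<in> U"
    using Suc.prems rec unfolding top_recurrent_def by blast
  \<comment> \<open>a return of \<open>W = U \<inter> f\<^sup>-\<^sup>n U\<close> after \<open>m > L\<close> steps is a return of \<open>U\<close> after \<open>n + m\<close> steps\<close>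
  define W where "W = U \<inter> {y \<in> topspace X. (f ^^ n) y \<in> U}"
  have "openin X W"
    unfolding W_def using Suc.prems continuous_map_funpow[OF f]
    by (blast intro: openin_continuous_map_preimage)
  moreover have "x \<in> W"
    using n Suc.prems openin_subset unfolding W_def by blast
  ultimately obtain m y where m: "m > L" "y \<in> W" "(f ^^ m) y \<in> W"
    using Suc.IH by blast
  have "(f ^^ (n + m)) y = (f ^^ n) ((f ^^ m) y)"
    by (simp add: funpow_add)
  then have "y \<in> U" "(f ^^ (n + m)) y \<in> U"
    using m unfolding W_def by auto
  moreover have "n + m > Suc L"
    using n m by simp
  ultimately show ?case by blast
qed

lemma funpow_prod_map:
  "x \<in> extensional {..<N} \<Longrightarrow>
     (prod_map N f ^^ n) x = restrict (\<lambda>i. (f ^^ n) (x i)) {..<N}"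
proof (induction n)
  case 0
  then show ?case by (simp add: extensional_restrict)
next
  case (Suc n)
  then show ?case by (auto simp: prod_map_def restrict_def)
qed

lemma continuous_map_prod_map:
  assumes "continuous_map X X f"
  shows "continuous_map (power_space X N) (power_space X N) (prod_map N f)"
  unfolding power_space_def continuous_map_componentwise
proof (intro conjI ballI)
  show "prod_map N f ` topspace (product_topology (\<lambda>_. X) {..<N}) \<subseteq> extensional {..<N}"
    by (auto simp: prod_map_def)
next
  fix k assume k: "k \<in> {..<N}"
  have "continuous_map (product_topology (\<lambda>_. X) {..<N}) X (f \<circ> (\<lambda>x. x k))"
    using continuous_map_product_projection[OF k] assms by (rule continuous_map_compose)
  moreover have "f \<circ> (\<lambda>x. x k) = (\<lambda>x. prod_map N f x k)"
    using k by (auto simp: prod_map_def)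
  ultimately show "continuous_map (product_topology (\<lambda>_. X) {..<N}) X (\<lambda>x. prod_map N f x k)"
    by simp
qed

lemma prod_map_box_return_iff:
  "(prod_map N f ^^ n) ` (\<Pi>\<^sub>E i\<in>{..<N}. V i) \<inter> (\<Pi>\<^sub>E i\<in>{..<N}. V i) \<noteq> {} \<longleftrightarrow>
     (\<forall>i<N. (f ^^ n) ` V i \<inter> V i \<noteq> {})"
proof
  assume "(prod_map N f ^^ n) ` (\<Pi>\<^sub>E i\<in>{..<N}. V i) \<inter> (\<Pi>\<^sub>E i\<in>{..<N}. V i) \<noteq> {}"
  then obtain x where x: "x \<in> (\<Pi>\<^sub>E i\<in>{..<N}. V i)" "(prod_map N f ^^ n) x \<in> (\<Pi>\<^sub>E i\<in>{..<N}. V i)"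
    by blast
  have "x \<in> extensional {..<N}"
    using x(1) by (simp add: PiE_iff)
  then have "x i \<in> V i \<and> (f ^^ n) (x i) \<in> V i" if "i < N" for i
    using x that by (simp add: funpow_prod_map PiE_iff)
  then show "\<forall>i<N. (f ^^ n) ` V i \<inter> V i \<noteq> {}"
    by blast
next
  assume "\<forall>i<N. (f ^^ n) ` V i \<inter> V i \<noteq> {}"
  then have "\<forall>i. \<exists>y. i < N \<longrightarrow> y \<in> V i \<and> (f ^^ n) y \<in> V i"
    by blast
  from choice[OF this] obtain y where y: "\<And>i. i < N \<Longrightarrow> y i \<in> V i \<and> (f ^^ n) (y i) \<in> V i"
    by blast
  define x where "x = restrict y {..<N}"
  have "x \<in> (\<Pi>\<^sub>E i\<in>{..<N}. V i)" "(prod_map N f ^^ n) x \<in> (\<Pi>\<^sub>E i\<in>{..<N}. V i)"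
    using y by (auto simp: x_def funpow_prod_map)
  then show "(prod_map N f ^^ n) ` (\<Pi>\<^sub>E i\<in>{..<N}. V i) \<inter> (\<Pi>\<^sub>E i\<in>{..<N}. V i) \<noteq> {}"
    by blast
qed

lemma top_quasi_rigid_imp_top_recurrent_power:
  assumes "top_quasi_rigid X f"
  shows "top_recurrent (power_space X N) (prod_map N f)"
  unfolding top_recurrent_def
proof (intro allI impI)
  obtain nk where nk: "top_quasi_rigid_wrt X f nk"
    using assms unfolding top_quasi_rigid_def by blast
  then have rigid: "\<exists>k0. \<forall>k\<ge>k0. (f ^^ nk k) ` W \<inter> W \<noteq> {}" if "openin X W" "W \<noteq> {}" for W
    using that unfolding top_quasi_rigid_wrt_def by blast
  fix U assume U: "openin (power_space X N) U \<and> U \<noteq> {}"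
  then obtain z where "z \<in> U" by blast
  have "openin (product_topology (\<lambda>_. X) {..<N}) U"
    using U by (simp add: power_space_def)
  from product_topology_open_contains_basis[OF this \<open>z \<in> U\<close>]
  obtain V where V: "z \<in> (\<Pi>\<^sub>E i\<in>{..<N}. V i)" "\<And>i. openin X (V i)" "(\<Pi>\<^sub>E i\<in>{..<N}. V i) \<subseteq> U"
    by blast
  have "V i \<noteq> {}" if "i < N" for i
    using V(1) that by (auto simp: PiE_iff)
  then have "\<forall>i. \<exists>k0. i < N \<longrightarrow> (\<forall>k\<ge>k0. (f ^^ nk k) ` V i \<inter> V i \<noteq> {})"
    using rigid[OF V(2)] by blast
  from choice[OF this] obtain k0
    where k0: "\<And>i k. i < N \<Longrightarrow> k \<ge> k0 i \<Longrightarrow> (f ^^ nk k) ` V i \<inter> V i \<noteq> {}"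
    by blast
  define K where "K = Max (k0 ` {..<N})"
  have "k0 i \<le> K" if "i < N" for i
    unfolding K_def using that by (intro Max_ge) auto
  then have "(prod_map N f ^^ nk K) ` (\<Pi>\<^sub>E i\<in>{..<N}. V i) \<inter> (\<Pi>\<^sub>E i\<in>{..<N}. V i) \<noteq> {}"
    unfolding prod_map_box_return_iff using k0 by blast
  then have "(prod_map N f ^^ nk K) ` U \<inter> U \<noteq> {}"
    using V(3) by blast
  moreover have "nk K \<ge> 1"
    using nk unfolding top_quasi_rigid_wrt_def by blast
  ultimately show "\<exists>n\<ge>1. (prod_map N f ^^ n) ` U \<inter> U \<noteq> {}"
    by blast
qed

lemma simultaneous_returns_if_top_recurrent_power:
  fixes V :: "nat \<Rightarrow> 'a set"
  assumes f: "continuous_map X X f"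
    and rec: "\<And>N. N \<ge> 1 \<Longrightarrow> top_recurrent (power_space X N) (prod_map N f)"
    and V: "\<And>m. openin X (V m)" "\<And>m. V m \<noteq> {}"
  shows "\<exists>n>L. \<forall>j\<le>M. (f ^^ n) ` V j \<inter> V j \<noteq> {}"
proof -
  let ?B = "\<Pi>\<^sub>E i\<in>{..<Suc M}. V i"
  have "openin (power_space X (Suc M)) ?B"
    unfolding power_space_def by (simp add: openin_PiE V(1))
  moreover have "?B \<noteq> {}"
    by (simp add: PiE_eq_empty_iff V(2))
  moreover have "top_recurrent (power_space X (Suc M)) (prod_map (Suc M) f)"
    using rec by simp
  ultimately obtain n where "n > L" "(prod_map (Suc M) f ^^ n) ` ?B \<inter> ?B \<noteq> {}"
    using top_recurrent_returns_after continuous_map_prod_map[OF f] by metis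
  then show ?thesis
    by (auto simp: prod_map_box_return_iff less_Suc_eq_le)
qed

lemma top_quasi_rigid_if_simultaneous_returns:
  fixes V :: "nat \<Rightarrow> 'a set"
  assumes V: "\<And>U. openin X U \<Longrightarrow> U \<noteq> {} \<Longrightarrow> \<exists>m. V m \<subseteq> U"
    and returns: "\<And>M L. \<exists>n>L. \<forall>j\<le>M. (f ^^ n) ` V j \<inter> V j \<noteq> {}"
  shows "top_quasi_rigid X f"
proof -
  let ?P = "\<lambda>k n. n \<ge> 1 \<and> (\<forall>j\<le>k. (f ^^ n) ` V j \<inter> V j \<noteq> {})"
  have "\<exists>nk. \<forall>k. ?P k (nk k) \<and> nk k < nk (Suc k)"
  proof (rule dependent_nat_choice)
    show "\<exists>n. ?P 0 n"
      using returns[where M = 0 and L = 0] by (auto simp: Suc_le_eq)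
    show "\<exists>n'. ?P (Suc k) n' \<and> n < n'" if "?P k n" for k n
    proof -
      obtain n' where "n' > n" "\<forall>j\<le>Suc k. (f ^^ n') ` V j \<inter> V j \<noteq> {}"
        using returns[where M = "Suc k" and L = n] by blast
      moreover have "n' \<ge> 1"
        using that \<open>n' > n\<close> by simp
      ultimately show ?thesis by blast
    qed
  qed
  then obtain nk where nk: "\<And>k. nk k \<ge> 1 \<and> (\<forall>j\<le>k. (f ^^ nk k) ` V j \<inter> V j \<noteq> {})"
    and nk_Suc: "\<And>k. nk k < nk (Suc k)"
    by blast
  have nk_returns: "(f ^^ nk k) ` V j \<inter> V j \<noteq> {}" if "j \<le> k" for j k
    using nk[of k] that by blast
  have "\<exists>k0. \<forall>k\<ge>k0. (f ^^ nk k) ` U \<inter> U \<noteq> {}" if U: "openin X U" "U \<noteq> {}" for U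
  proof -
    obtain m where "V m \<subseteq> U"
      using V[OF U] by blast
    have "(f ^^ nk k) ` U \<inter> U \<noteq> {}" if "k \<ge> m" for k
      using nk_returns[OF that] \<open>V m \<subseteq> U\<close> by blast
    then show ?thesis by blast
  qed
  moreover have "strict_mono nk"
    using nk_Suc by (simp add: strict_mono_Suc_iff)
  ultimately have "top_quasi_rigid_wrt X f nk"
    using nk unfolding top_quasi_rigid_wrt_def by blast
  then show ?thesis
    unfolding top_quasi_rigid_def by blast
qed

lemma second_countable_nonempty_open_sequence:
  obtains V :: "nat \<Rightarrow> 'a::second_countable_topology set"
  where "\<And>m. open (V m)" "\<And>m. V m \<noteq> {}" "\<And>U. open U \<Longrightarrow> U \<noteq> {} \<Longrightarrow> \<exists>m. V m \<subseteq> U"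
proof -
  obtain B :: "'a set set" where B: "countable B" "topological_basis B"
    using ex_countable_basis by blast
  define B' where "B' = B - {{}}"
  have B'_refines: "\<exists>b\<in>B'. b \<subseteq> U" if "open U" "U \<noteq> {}" for U
  proof -
    obtain x where "x \<in> U"
      using \<open>U \<noteq> {}\<close> by blast
    then obtain b where "b \<in> B" "x \<in> b" "b \<subseteq> U"
      using topological_basisE[OF B(2) \<open>open U\<close>] by blast
    then show ?thesis
      unfolding B'_def by blast
  qed
  have "B' \<noteq> {}"
    using B'_refines[OF open_UNIV UNIV_not_empty] by blast
  have "countable B'"
    using B(1) unfolding B'_def by simp
  show ?thesis
  proof
    show "open (from_nat_into B' m)" "from_nat_into B' m \<noteq> {}" for m
      using from_nat_into[OF \<open>B' \<noteq> {}\<close>] topological_basis_open[OF B(2)] unfolding B'_def by auto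
    show "\<exists>m. from_nat_into B' m \<subseteq> U" if "open U" "U \<noteq> {}" for U
      using B'_refines[OF that] from_nat_into_surj[OF \<open>countable B'\<close>] by metis
  qed
qed

theorem mainTheorem1:
  fixes T :: "'a::{t2_space, second_countable_topology} \<Rightarrow> 'a"
  assumes "continuous_on UNIV T"
  shows "top_quasi_rigid euclidean T \<longleftrightarrow>
         (\<forall>N::nat. N \<ge> 1 \<longrightarrow> top_recurrent (power_space euclidean N) (prod_map N T))"
proof
  assume "top_quasi_rigid euclidean T"
  then show "\<forall>N::nat. N \<ge> 1 \<longrightarrow> top_recurrent (power_space euclidean N) (prod_map N T)"
    by (blast intro: top_quasi_rigid_imp_top_recurrent_power)
next
  assume rec: "\<forall>N::nat. N \<ge> 1 \<longrightarrow> top_recurrent (power_space euclidean N) (prod_map N T)"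
  obtain V :: "nat \<Rightarrow> 'a set"
    where V: "\<And>m. open (V m)" "\<And>m. V m \<noteq> {}" "\<And>U. open U \<Longrightarrow> U \<noteq> {} \<Longrightarrow> \<exists>m. V m \<subseteq> U"
    using second_countable_nonempty_open_sequence by blast
  have "continuous_map euclidean euclidean T"
    using assms by simp
  then have "\<exists>n>L. \<forall>j\<le>M. (T ^^ n) ` V j \<inter> V j \<noteq> {}" for M L
    using rec V(1,2) by (intro simultaneous_returns_if_top_recurrent_power) auto
  then show "top_quasi_rigid euclidean T"
    using V(3) by (intro top_quasi_rigid_if_simultaneous_returns[of euclidean V]) auto
qed

end
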